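(* Let $w,w'\in W^{\mathfrak p}$ and consider a circle (connected component) of the circle diagram $\overline{C(w')}C(w)$. (1) If the circle crosses the middle (the line $x=0$), then either for every linked pair of which it contains an arc it contains both arcs of that pair, or for every linked pair of which it contains an arc it contains only one arc of that pair. (2) If the circle contains only one arc of each linked pair it meets, then the number of distinct linked pairs it meets is even. (3) If the circle contains both arcs of each linked pair it meets, then the number of distinct linked pairs it meets is odd.
   Context: Let $n\ge4$, $W$ the Weyl group of type $D_n$ with simple reflections $s_0,\dots,s_{n-1}$ ($s_0,s_1$ both joined to $s_2$, $s_i$ joined to $s_{i+1}$ for $i\ge2$), $W_{\mathfrak p}=\langle s_1,\dots,s_{n-1}\rangle$, $W^{\mathfrak p}$ the minimal length representatives of $W_{\mathfrak p}\backslash W$. For $w\in W^{\mathfrak p}$ let $(\alpha_1,\dots,\alpha_n)=(+,\dots,+)\cdot w$ for the right action on $\{+,-\}^n$ where $s_i$ ($i\ge1$) swaps entries $i,i+1$ and $s_0$ sends $(a_1,a_2,\dots)$ to $(-a_2,-a_1,\dots)$; set $\alpha_{-i}=-\alpha_i$. Label $P=\{-2n,\dots,-1,1,\dots,2n\}$ by $+$ at $j<-n$, $-$ at $j>n$, $\alpha_j$ at $1\le|j|\le n$. The cup diagram $C(w)$ is obtained from the unique non-crossing matching of $P$ by arcs in the lower half plane joining each $+$ to a $-$ on its right, by replacing, for the arcs $(-y_1,y_1),\dots,(-y_{2k},y_{2k})$ crossing $0$ ($y_1<\dots<y_{2k}$), each pair $(-y_{2j-1},y_{2j-1}),(-y_{2j},y_{2j})$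 by the two arcs joining $-y_{2j}$ to $y_{2j-1}$ and $-y_{2j-1}$ to $y_{2j}$, which cross on $x=0$ and form a linked pair of cups. The cap diagram $\overline{C(w')}$ is the reflection of $C(w')$ in the horizontal axis (its linked pairs are the reflections of those of $C(w')$). The circle diagram $\overline{C(w')}C(w)$ is the union of the cups of $C(w)$ and the caps of $\overline{C(w')}$; every point of $P$ lies on exactly one cup and one cap, so it is a union of closed curves (called circles), which can cross only at the crossing points of linked pairs. A circle meets (contains) a linked pair if it contains at least one of its two arcs. *)

theory Defs
  imports Main
begin

text \<open>Simple reflections: s_0 sends e1 to -e2 and e2 to -e1; s_i (i >= 1) swaps e_i and e_(i+1).
  s_0, s_1 are both joined to s_2 in the Dynkin diagram.  Elements of W are the products of
  simple reflections, realized (faithfully) as signed permutations int => int.\<close>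

definition sgen :: "nat \<Rightarrow> int \<Rightarrow> int" where
  "sgen i x =
    (if i = 0 then
       (if x = 1 then -2 else if x = 2 then -1 else if x = -1 then 2 else if x = -2 then 1 else x)
     else
       (if x = int i then int i + 1 else if x = int i + 1 then int i
        else if x = - int i then - (int i + 1) else if x = - (int i + 1) then - int i else x))"

definition perm_of :: "nat list \<Rightarrow> int \<Rightarrow> int" where
  "perm_of ws = foldr (\<lambda>i f. sgen i \<circ> f) ws id"

definition W_elt :: "nat \<Rightarrow> (int \<Rightarrow> int) \<Rightarrow> bool" where
  "W_elt n g \<longleftrightarrow> (\<exists>ws. set ws \<subseteq> {..<n} \<and> perm_of ws = g)"

definition lenW :: "nat \<Rightarrow> (int \<Rightarrow> int) \<Rightarrow> nat" where
  "lenW n g = (LEAST k. \<exists>ws. set ws \<subseteq> {..<n} \<and> length ws = k \<and> perm_of ws = g)"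

text \<open>W^p: minimal length representatives of the right cosets W_p w, W_p = <s_1,...,s_(n-1)>.\<close>
definition in_Wp :: "nat \<Rightarrow> (int \<Rightarrow> int) \<Rightarrow> bool" where
  "in_Wp n g \<longleftrightarrow> W_elt n g \<and>
     (\<forall>us. set us \<subseteq> {1..<n} \<longrightarrow> lenW n g \<le> lenW n (perm_of us \<circ> g))"

text \<open>Sign sequences: nat => bool, entries at 1..n, True = +, False = -.\<close>
definition act_gen :: "nat \<Rightarrow> (nat \<Rightarrow> bool) \<Rightarrow> nat \<Rightarrow> bool" where
  "act_gen i a =
    (if i = 0 then a(1 := \<not> a 2, 2 := \<not> a 1) else a(i := a (Suc i), Suc i := a i))"

definition act_word :: "(nat \<Rightarrow> bool) \<Rightarrow> nat list \<Rightarrow> nat \<Rightarrow> bool" where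
  "act_word a ws = foldl (\<lambda>b i. act_gen i b) a ws"

definition signs :: "nat \<Rightarrow> (int \<Rightarrow> int) \<Rightarrow> nat \<Rightarrow> bool" where
  "signs n g = act_word (\<lambda>_. True) (SOME ws. set ws \<subseteq> {..<n} \<and> perm_of ws = g)"

definition Pts :: "nat \<Rightarrow> int set" where
  "Pts n = {- 2 * int n .. 2 * int n} - {0}"

definition lab :: "nat \<Rightarrow> (nat \<Rightarrow> bool) \<Rightarrow> int \<Rightarrow> bool" where
  "lab n al j =
    (if j < - int n then True else if j > int n then False
     else if j > 0 then al (nat j) else \<not> al (nat (- j)))"

text \<open>Arcs are pairs (x,y) with x < y.  A non-crossing matching of P in the lower half plane
  joining each + to a - on its right.\<close>
definition nc_matching :: "nat \<Rightarrow> (nat \<Rightarrow> bool) \<Rightarrow> (int \<times> int) set \<Rightarrow> bool" where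
  "nc_matching n al M \<longleftrightarrow>
     (\<forall>(x, y) \<in> M. x \<in> Pts n \<and> y \<in> Pts n \<and> x < y \<and> lab n al x \<and> \<not> lab n al y) \<and>
     (\<forall>p \<in> Pts n. \<exists>!e. e \<in> M \<and> (p = fst e \<or> p = snd e)) \<and>
     (\<forall>(a, b) \<in> M. \<forall>(c, d) \<in> M. \<not> (a < c \<and> c < b \<and> b < d))"

definition matching :: "nat \<Rightarrow> (nat \<Rightarrow> bool) \<Rightarrow> (int \<times> int) set" where
  "matching n al = (THE M. nc_matching n al M)"

definition crossing_arcs :: "(int \<times> int) set \<Rightarrow> (int \<times> int) set" where
  "crossing_arcs M = {e \<in> M. fst e < 0 \<and> 0 < snd e}"

text \<open>y_1 < ... < y_(2k): right endpoints of the arcs crossing 0 (list is 0-indexed).\<close>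
definition ys_of :: "nat \<Rightarrow> (nat \<Rightarrow> bool) \<Rightarrow> int list" where
  "ys_of n al = sorted_list_of_set (snd ` crossing_arcs (matching n al))"

text \<open>Linked pairs: for the j-th pair, arcs joining -y_(2j) to y_(2j-1) and -y_(2j-1) to y_(2j).\<close>
definition linked_pairs :: "nat \<Rightarrow> (nat \<Rightarrow> bool) \<Rightarrow> (int \<times> int) set set" where
  "linked_pairs n al =
     (let ys = ys_of n al in
      {{(- (ys ! (2 * j + 1)), ys ! (2 * j)), (- (ys ! (2 * j)), ys ! (2 * j + 1))} | j.
         j < length ys div 2})"

definition cup_arcs :: "nat \<Rightarrow> (nat \<Rightarrow> bool) \<Rightarrow> (int \<times> int) set" where
  "cup_arcs n al =
     (matching n al - crossing_arcs (matching n al)) \<union> \<Union> (linked_pairs n al)"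

text \<open>Tagged arcs: (False, e) is a cup of C(w), (True, e) is a cap of the reflection of C(w').\<close>
type_synonym tarc = "bool \<times> int \<times> int"

definition CD_arcs :: "nat \<Rightarrow> (int \<Rightarrow> int) \<Rightarrow> (int \<Rightarrow> int) \<Rightarrow> tarc set" where
  "CD_arcs n w' w = Pair False ` cup_arcs n (signs n w) \<union> Pair True ` cup_arcs n (signs n w')"

definition CD_linked :: "nat \<Rightarrow> (int \<Rightarrow> int) \<Rightarrow> (int \<Rightarrow> int) \<Rightarrow> tarc set set" where
  "CD_linked n w' w =
     image (Pair False) ` linked_pairs n (signs n w) \<union> image (Pair True) ` linked_pairs n (signs n w')"

definition share_end :: "tarc \<Rightarrow> tarc \<Rightarrow> bool" where
  "share_end e f \<longleftrightarrow> {fst (snd e), snd (snd e)} \<inter> {fst (snd f), snd (snd f)} \<noteq> {}"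

text \<open>Circles: connected components (arcs linked through common endpoints; crossings of
  linked pairs do not connect).\<close>
definition circles :: "nat \<Rightarrow> (int \<Rightarrow> int) \<Rightarrow> (int \<Rightarrow> int) \<Rightarrow> tarc set set" where
  "circles n w' w =
     (let A = CD_arcs n w' w in
      {{f. (e, f) \<in> {(x, y). x \<in> A \<and> y \<in> A \<and> share_end x y}\<^sup>*} | e. e \<in> A})"

definition crosses_middle :: "tarc set \<Rightarrow> bool" where
  "crosses_middle C \<longleftrightarrow> (\<exists>e \<in> C. fst (snd e) < 0 \<and> 0 < snd (snd e))"

definition meets :: "tarc set \<Rightarrow> tarc set \<Rightarrow> bool" where
  "meets C L \<longleftrightarrow> L \<inter> C \<noteq> {}"

end

theory Submission
  imports Defs
begin

text \<open>Cups and caps are both fixed-point-free involutions of the points that commute with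
  \<open>x \<mapsto> -x\<close> and have no arc equal to its own mirror image: the non-crossing matching of a sign
  sequence is determined by the height function of the corresponding \<open>\<plusminus>1\<close> path, whose symmetry
  forces the arcs crossing \<open>0\<close> to be the symmetric arcs \<open>(-y, y)\<close>, and these are exactly the arcs
  that the linked pairs replace.

  A circle is then a closed walk alternating between the two involutions, and reflection maps
  circles to circles.  Hence a circle containing an arc together with its mirror image is
  symmetric, and otherwise it meets each linked pair in a single arc; this holds for every circle,
  crossing the middle or not.  The linked pairs a circle meets correspond to its arcs crossing
  \<open>0\<close>, i.e. to the sign changes of the walk.  A closed walk changes sign an even number of
  times.  A symmetric circle through \<open>p\<close> passes through \<open>-p\<close> after half a period, the walk being
  antiperiodic; the first half has an odd number of sign changes, so there are twice an odd number
  of crossing arcs and an odd number of linked pairs.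

  Only the sign sequences of \<open>w\<close> and \<open>w'\<close> matter.\<close>

section \<open>Parity counting\<close>

lemma even_card_involution:
  fixes f :: "'a::linorder \<Rightarrow> 'a"
  assumes "finite A"
    and maps: "\<And>x. x \<in> A \<Longrightarrow> f x \<in> A"
    and invol: "\<And>x. x \<in> A \<Longrightarrow> f (f x) = x"
    and no_fix: "\<And>x. x \<in> A \<Longrightarrow> f x \<noteq> x"
  shows "even (card A)"
proof -
  define L where "L = {x \<in> A. x < f x}"
  have A: "A = L \<union> f ` L"
  proof (intro equalityI subsetI)
    fix x assume x: "x \<in> A"
    show "x \<in> L \<union> f ` L"
    proof (cases "x < f x")
      case False
      then have "f x \<in> L" using x maps invol no_fix[OF x] by (auto simp: L_def)
      then show ?thesis using invol[OF x] by (metis UnI2 image_eqI)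
    qed (use x L_def in auto)
  qed (use maps L_def in auto)
  have "L \<inter> f ` L = {}" using invol by (fastforce simp: L_def)
  moreover have "card (f ` L) = card L"
    by (rule card_image, rule inj_onI) (metis invol L_def mem_Collect_eq)
  moreover have "finite L" using \<open>finite A\<close> by (simp add: L_def)
  ultimately show ?thesis by (subst A) (simp add: card_Un_disjoint)
qed

lemma even_card_changes_iff:
  fixes s :: "nat \<Rightarrow> bool"
  shows "even (card {k. k < m \<and> s k \<noteq> s (Suc k)}) \<longleftrightarrow> s 0 = s m"
proof (induction m)
  case (Suc m)
  have "{k. k < Suc m \<and> s k \<noteq> s (Suc k)} =
      {k. k < m \<and> s k \<noteq> s (Suc k)} \<union> (if s m \<noteq> s (Suc m) then {m} else {})"
    by (auto simp: less_Suc_eq)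
  then show ?case using Suc.IH by auto
qed simp

text \<open>A sequence with \<open>s (b + k) = \<not> s k\<close> changes value an odd number of times on \<open>[0, b)\<close>, since
  \<open>s b \<noteq> s 0\<close>, and equally often on \<open>[b, 2b)\<close>.\<close>
lemma card_changes_antiperiodic:
  fixes s :: "nat \<Rightarrow> bool"
  assumes anti: "\<And>k. s (b + k) = (\<not> s k)"
  shows "card {k. k < 2 * b \<and> s k \<noteq> s (Suc k)} mod 4 = 2"
proof -
  define Ch where "Ch = {k. k < b \<and> s k \<noteq> s (Suc k)}"
  have "{k. k < 2 * b \<and> s k \<noteq> s (Suc k)} = Ch \<union> (+) b ` Ch"
  proof (intro equalityI subsetI)
    fix k assume k: "k \<in> {k. k < 2 * b \<and> s k \<noteq> s (Suc k)}"
    show "k \<in> Ch \<union> (+) b ` Ch"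
    proof (cases "k < b")
      case False
      then have "k = b + (k - b)" by simp
      moreover have "k - b \<in> Ch"
        using k anti[of "k - b"] anti[of "Suc (k - b)"] False by (auto simp: Ch_def)
      ultimately show ?thesis by blast
    qed (use k Ch_def in auto)
  next
    fix k assume "k \<in> Ch \<union> (+) b ` Ch"
    moreover have "s (b + j) \<noteq> s (Suc (b + j))" if "j \<in> Ch" for j
      using that anti[of j] anti[of "Suc j"] by (simp add: Ch_def)
    ultimately show "k \<in> {k. k < 2 * b \<and> s k \<noteq> s (Suc k)}" by (auto simp: Ch_def)
  qed
  moreover have "Ch \<inter> (+) b ` Ch = {}" by (auto simp: Ch_def)
  ultimately have "card {k. k < 2 * b \<and> s k \<noteq> s (Suc k)} = 2 * card Ch"
    by (simp add: card_Un_disjoint card_image Ch_def)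
  moreover have "odd (card Ch)"
    using even_card_changes_iff[of b s] anti[of 0] by (simp add: Ch_def)
  ultimately show ?thesis by presburger
qed

section \<open>Perfect and symmetric matchings\<close>

definition mirror :: "int \<times> int \<Rightarrow> int \<times> int" where
  "mirror e = (- snd e, - fst e)"

definition arc :: "int \<Rightarrow> int \<Rightarrow> int \<times> int" where
  "arc a b = (min a b, max a b)"

definition ends :: "int \<times> int \<Rightarrow> int set" where
  "ends e = {fst e, snd e}"

definition crosses_zero :: "int \<times> int \<Rightarrow> bool" where
  "crosses_zero e \<longleftrightarrow> fst e < 0 \<and> 0 < snd e"

lemma mirror_mirror [simp]: "mirror (mirror e) = e"
  by (simp add: mirror_def)

lemma apsnd_mirror_mirror [simp]: "apsnd mirror (apsnd mirror f) = f"
  by (cases f) simp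

lemma mirror_arc: "mirror (arc a b) = arc (- a) (- b)"
  by (auto simp: arc_def mirror_def)

lemma arc_commute: "arc a b = arc b a"
  by (auto simp: arc_def)

lemma arc_eq_iff: "arc a b = arc a' b' \<longleftrightarrow> (a = a' \<and> b = b') \<or> (a = b' \<and> b = a')"
  by (auto simp: arc_def min_def max_def)

lemma ends_arc [simp]: "ends (arc a b) = {a, b}"
  by (auto simp: arc_def ends_def min_def max_def)

lemma crosses_zero_mirror [simp]: "crosses_zero (mirror e) \<longleftrightarrow> crosses_zero e"
  by (auto simp: crosses_zero_def mirror_def)

lemma share_end_iff: "share_end f g \<longleftrightarrow> ends (snd f) \<inter> ends (snd g) \<noteq> {}"
  by (simp add: share_end_def ends_def)

locale perfect_matching =
  fixes X :: "int set" and U :: "(int \<times> int) set"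
  assumes arc_ends: "e \<in> U \<Longrightarrow> fst e \<in> X \<and> snd e \<in> X \<and> fst e < snd e"
    and unique_arc_at: "p \<in> X \<Longrightarrow> \<exists>!e. e \<in> U \<and> p \<in> ends e"
begin

definition mate :: "int \<Rightarrow> int" where
  "mate p = (THE q. arc p q \<in> U)"

lemma arc_at_eq: "p \<in> X \<Longrightarrow> e \<in> U \<Longrightarrow> p \<in> ends e \<Longrightarrow> f \<in> U \<Longrightarrow> p \<in> ends f \<Longrightarrow> e = f"
  using unique_arc_at by blast

lemma arc_eq_arc_mate: assumes "p \<in> X" "e \<in> U" "p \<in> ends e" shows "e = arc p (mate p)"
proof -
  have arc_uniq: "q = q'" if "arc p q \<in> U" "arc p q' \<in> U" for q q'
    using arc_at_eq[OF assms(1) that(1) _ that(2)] by (auto simp: arc_eq_iff)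
  have "e = arc p (if p = fst e then snd e else fst e)"
    using assms(3) arc_ends[OF assms(2)] by (cases e) (auto simp: ends_def arc_def)
  then obtain q where q: "e = arc p q" by blast
  then have "mate p = q"
    unfolding mate_def using assms(2) arc_uniq by blast
  then show ?thesis using q by simp
qed

lemma arc_mate: assumes "p \<in> X" shows "arc p (mate p) \<in> U"
  using unique_arc_at[OF assms] arc_eq_arc_mate[OF assms] by blast

lemma mate_eqI: "p \<in> X \<Longrightarrow> arc p q \<in> U \<Longrightarrow> mate p = q"
  using arc_eq_arc_mate[of p "arc p q"] by (auto simp: arc_eq_iff)

lemma mate_mem: assumes "p \<in> X" shows "mate p \<in> X"
  using arc_ends[OF arc_mate[OF assms]] by (cases "p \<le> mate p") (auto simp: arc_def)

lemma mate_neq: assumes "p \<in> X" shows "mate p \<noteq> p"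
  using arc_ends[OF arc_mate[OF assms]] by (auto simp: arc_def)

lemma mate_mate: assumes "p \<in> X" shows "mate (mate p) = p"
  using mate_eqI[OF mate_mem[OF assms]] arc_mate[OF assms] by (simp add: arc_commute)

text \<open>The points left of \<open>0\<close> are those matched among themselves, which come in pairs, and the
  left ends of the crossing arcs.\<close>
lemma even_card_crossing_arcs:
  assumes "finite X" "0 \<notin> X" "even (card {p \<in> X. p < 0})"
  shows "even (card (crossing_arcs U))"
proof -
  define Inner where "Inner = {p \<in> X. p < 0 \<and> mate p < 0}"
  define Outer where "Outer = {p \<in> X. p < 0 \<and> 0 < mate p}"
  have "mate p \<noteq> 0" if "p \<in> X" for p
    using mate_mem[OF that] assms(2) by auto
  then have "{p \<in> X. p < 0} = Inner \<union> Outer"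
    by (auto simp: Inner_def Outer_def neq_iff)
  moreover have "Inner \<inter> Outer = {}" by (auto simp: Inner_def Outer_def)
  moreover have "finite Inner" "finite Outer" using assms(1) by (auto simp: Inner_def Outer_def)
  moreover have "even (card Inner)"
    by (rule even_card_involution[of _ mate]) (auto simp: Inner_def mate_mem mate_mate mate_neq assms(1))
  ultimately have "even (card Outer)" using assms(3) by (simp add: card_Un_disjoint)
  moreover have "crossing_arcs U = (\<lambda>p. (p, mate p)) ` Outer"
  proof (intro equalityI subsetI)
    fix e assume e: "e \<in> crossing_arcs U"
    then have a: "fst e \<in> X" "e = arc (fst e) (mate (fst e))" "fst e < 0" "0 < snd e"
      using arc_ends arc_eq_arc_mate by (auto simp: crossing_arcs_def ends_def)
    then have "e = (fst e, mate (fst e))"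
      by (auto simp: arc_def min_def max_def prod_eq_iff split: if_splits)
    moreover from this have "0 < mate (fst e)" using a(4) by (metis snd_conv)
    ultimately show "e \<in> (\<lambda>p. (p, mate p)) ` Outer"
      using a by (auto simp: Outer_def image_iff)
  qed (auto simp: crossing_arcs_def Outer_def arc_def dest: arc_mate)
  moreover have "inj_on (\<lambda>p. (p, mate p)) Outer" by (rule inj_onI) simp
  ultimately show ?thesis by (simp add: card_image)
qed

end

locale symmetric_matching = perfect_matching +
  assumes finite_points: "finite X"
    and zero_notin: "0 \<notin> X"
    and uminus_mem: "p \<in> X \<Longrightarrow> - p \<in> X"
    and mirror_mem: "e \<in> U \<Longrightarrow> mirror e \<in> U"
    and mirror_neq: "e \<in> U \<Longrightarrow> mirror e \<noteq> e"
begin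

lemma mate_uminus: assumes "p \<in> X" shows "mate (- p) = - mate p"
  using mate_eqI[OF uminus_mem[OF assms]] mirror_mem[OF arc_mate[OF assms]] by (simp add: mirror_arc)

lemma mate_neq_uminus: assumes "p \<in> X" shows "mate p \<noteq> - p"
  using mirror_neq[OF arc_mate[OF assms]] by (auto simp: mirror_arc arc_commute)

end

section \<open>Circles of two symmetric matchings\<close>

locale circle_diagram = cup: symmetric_matching X U + cap: symmetric_matching X V
  for X :: "int set" and U V :: "(int \<times> int) set"
begin

definition step :: "nat \<Rightarrow> int \<Rightarrow> int" where
  "step k = (if even k then cup.mate else cap.mate)"

text \<open>Walking around a circle from \<open>p\<close>, alternately along a cup and a cap.\<close>
primrec walk :: "nat \<Rightarrow> int \<Rightarrow> int" where
  "walk 0 p = p"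
| "walk (Suc k) p = step k (walk k p)"

lemma step_mem: "q \<in> X \<Longrightarrow> step k q \<in> X"
  by (simp add: step_def cup.mate_mem cap.mate_mem)

lemma step_step: "q \<in> X \<Longrightarrow> step k (step k q) = q"
  by (simp add: step_def cup.mate_mate cap.mate_mate)

lemma step_neq: "q \<in> X \<Longrightarrow> step k q \<noteq> q"
  by (simp add: step_def cup.mate_neq cap.mate_neq)

lemma step_neq_uminus: "q \<in> X \<Longrightarrow> step k q \<noteq> - q"
  by (simp add: step_def cup.mate_neq_uminus cap.mate_neq_uminus)

lemma step_uminus: "q \<in> X \<Longrightarrow> step k (- q) = - step k q"
  by (simp add: step_def cup.mate_uminus cap.mate_uminus)

lemma step_cong: "even k = even l \<Longrightarrow> step k = step l"
  by (simp add: step_def)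

lemma walk_mem: "p \<in> X \<Longrightarrow> walk k p \<in> X"
  by (induction k) (auto simp: step_mem)

lemma walk_uminus: "p \<in> X \<Longrightarrow> walk k (- p) = - walk k p"
  by (induction k) (auto simp: step_uminus walk_mem)

lemma step_walk_Suc: "p \<in> X \<Longrightarrow> step k (walk (Suc k) p) = walk k p"
  by (simp add: step_step walk_mem)

lemma walk_reverse:
  assumes "p \<in> X" "q \<in> X" "walk a p = walk b q" "odd (a + b)"
  shows "t \<le> b \<Longrightarrow> walk (a + t) p = walk (b - t) q"
proof (induction t)
  case (Suc t)
  then obtain k where k: "b = Suc t + k" using le_Suc_ex by blast
  have "even (a + t) = even k" using assms(4) k by auto
  then have "walk (a + Suc t) p = step k (walk (Suc k) q)"
    using Suc k step_cong[of "a + t" k] by simp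
  then show ?case using step_walk_Suc[OF assms(2)] k by simp
qed (use assms in simp)

lemma walk_backward:
  assumes "p \<in> X" "q \<in> X" "walk a p = walk b q" "even (a + b)"
  shows "t \<le> a \<Longrightarrow> t \<le> b \<Longrightarrow> walk (a - t) p = walk (b - t) q"
proof (induction t)
  case (Suc t)
  then obtain k l where k: "a = Suc t + k" "b = Suc t + l" using le_Suc_ex by metis
  have "even k = even l" using assms(4) k by auto
  then have "step k (walk (Suc k) p) = step l (walk (Suc l) q)"
    using Suc k step_cong[of k l] by simp
  then show ?case using step_walk_Suc assms(1,2) k by simp
qed (use assms in simp)

lemma walk_forward:
  assumes "walk a p = walk b q" "even (a + b)"
  shows "walk (a + t) p = walk (b + t) q"
proof (induction t)
  case (Suc t)
  have "even (a + t) = even (b + t)" using assms(2) by auto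
  then show ?case using Suc step_cong[of "a + t" "b + t"] by simp
qed (use assms in simp)

lemma walk_add: "even a \<Longrightarrow> walk (a + k) p = walk k (walk a p)"
  using walk_forward[of a p 0 "walk a p"] by simp

text \<open>Walking back and forth, a circle would have to contain an arc from a point to itself
  (resp. to its mirror image) halfway.\<close>
lemma walk_neq_odd:
  assumes "p \<in> X" "odd (a + b)"
  shows "walk a p \<noteq> walk b p"
proof
  assume eq: "walk a p = walk b p"
  have False if lt: "a' < b'" and odd: "odd (a' + b')" and eq': "walk a' p = walk b' p" for a' b'
  proof -
    obtain d where "b' = Suc (a' + d)" using lt less_imp_Suc_add by blast
    moreover from this have "even d" using odd by auto
    then obtain t where "d = t + t" by (metis evenE mult_2)
    ultimately have t: "b' = Suc (a' + t + t)" by simp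
    then have "b' - t = Suc (a' + t)" by simp
    moreover have "walk (a' + t) p = walk (b' - t) p"
      by (rule walk_reverse[OF assms(1) assms(1) eq' odd]) (simp add: t)
    ultimately show False using step_neq[OF walk_mem[OF assms(1)], of "a' + t" "a' + t"] by simp
  qed
  then show False using eq assms(2) by (metis add.commute linorder_neqE_nat odd_add)
qed

lemma walk_odd_neq_uminus:
  assumes "p \<in> X" "odd b"
  shows "walk b p \<noteq> - p"
proof
  assume "walk b p = - p"
  then have "walk 0 (- p) = walk b p" by simp
  moreover obtain t where "b = 2 * t + 1" using assms(2) by (rule oddE)
  then have "b - t = Suc t" by simp
  ultimately have "walk t (- p) = step t (walk t p)"
    using walk_reverse[OF cup.uminus_mem[OF assms(1)] assms(1), of 0 b t] assms(2) \<open>b = 2 * t + 1\<close>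
    by simp
  then show False
    using step_neq_uminus[OF walk_mem[OF assms(1)]] walk_uminus[OF assms(1)] by metis
qed

lemma walk_returns:
  assumes "p \<in> X"
  shows "\<exists>P>0. walk P p = p"
proof -
  have "(\<lambda>k. walk (2 * k) p) ` {0..card X} \<subseteq> X" using walk_mem assms by auto
  then have "\<not> inj_on (\<lambda>k. walk (2 * k) p) {0..card X}"
    using card_mono[OF cup.finite_points] card_inj_on_le[OF _ _ cup.finite_points] by fastforce
  then obtain i j where ij: "i \<noteq> j" "walk (2 * i) p = walk (2 * j) p"
    unfolding inj_on_def by blast
  have "\<exists>P>0. walk P p = p" if "i' < j'" "walk (2 * i') p = walk (2 * j') p" for i' j'
  proof -
    have "walk (2 * i' - 2 * i') p = walk (2 * j' - 2 * i') p"
      using walk_backward[OF assms assms that(2), of "2 * i'"] that(1) by simp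
    then show ?thesis using that(1) by (intro exI[of _ "2 * j' - 2 * i'"]) simp
  qed
  then show ?thesis using ij by (cases "i < j") (auto simp: neq_iff)
qed

definition period :: "int \<Rightarrow> nat" where
  "period p = (LEAST P. 0 < P \<and> walk P p = p)"

lemma period_pos: "p \<in> X \<Longrightarrow> 0 < period p"
  and walk_period: "p \<in> X \<Longrightarrow> walk (period p) p = p"
  using LeastI_ex[OF walk_returns] unfolding period_def by auto

lemma walk_less_period_neq: "0 < a \<Longrightarrow> a < period p \<Longrightarrow> walk a p \<noteq> p"
  using not_less_Least unfolding period_def by blast

lemma even_period: "p \<in> X \<Longrightarrow> even (period p)"
  using walk_neq_odd[of p 0 "period p"] walk_period by auto

lemma walk_period_add: "p \<in> X \<Longrightarrow> walk (q * period p + m) p = walk m p"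
proof (induction q)
  case (Suc q)
  then show ?case
    using walk_add[OF even_period, of p "q * period p + m"] walk_period by (simp add: add.assoc)
qed simp

lemma walk_mod_period: "p \<in> X \<Longrightarrow> walk k p = walk (k mod period p) p"
  using walk_period_add[of p "k div period p" "k mod period p"] by simp

lemma walk_inj_on_period:
  assumes "p \<in> X" "k < period p" "l < period p" "walk k p = walk l p"
  shows "k = l"
proof (rule ccontr)
  have False if kl: "k' < l'" "l' < period p" "walk k' p = walk l' p" for k' l'
  proof (cases "even (k' + l')")
    case True
    have "walk (k' + (period p - k')) p = walk (l' + (period p - k')) p"
      by (rule walk_forward[OF kl(3) True])
    moreover have "k' + (period p - k') = period p" "l' + (period p - k') = 1 * period p + (l' - k')"
      using kl by auto
    ultimately have "walk (l' - k') p = p"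
      using walk_period_add[OF assms(1), of 1 "l' - k'"] walk_period[OF assms(1)] by simp
    then show False using walk_less_period_neq[of "l' - k'" p] kl by simp
  qed (use walk_neq_odd[OF assms(1)] kl in blast)
  moreover assume "k \<noteq> l"
  ultimately show False using assms by (metis linorder_neqE_nat)
qed

definition walk_arc :: "nat \<Rightarrow> int \<Rightarrow> tarc" where
  "walk_arc k p = (odd k, arc (walk k p) (walk (Suc k) p))"

lemma ends_walk_arc: "ends (snd (walk_arc k p)) = {walk k p, walk (Suc k) p}"
  by (simp add: walk_arc_def)

lemma walk_arc_inj_on_period:
  assumes "p \<in> X" "k < period p" "l < period p" "walk_arc k p = walk_arc l p"
  shows "k = l"
proof -
  have "odd k = odd l" "arc (walk k p) (walk (Suc k) p) = arc (walk l p) (walk (Suc l) p)"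
    using assms(4) by (auto simp: walk_arc_def)
  then show ?thesis
    using walk_inj_on_period[OF assms(1-3)] walk_neq_odd[OF assms(1), of k "Suc l"]
    by (auto simp: arc_eq_iff)
qed

lemma walk_arc_mod_period:
  assumes "p \<in> X"
  shows "walk_arc k p = walk_arc (k mod period p) p"
proof -
  have "walk (Suc k) p = walk (Suc (k mod period p)) p"
    using walk_mod_period[OF assms, of "Suc k"] walk_mod_period[OF assms, of "Suc (k mod period p)"]
    by (simp add: mod_Suc_eq del: walk.simps)
  moreover have "odd k = odd (k mod period p)"
    using even_period[OF assms] by (metis dvd_mod_iff)
  ultimately show ?thesis
    using walk_mod_period[OF assms, of k] by (simp add: walk_arc_def del: walk.simps)
qed

lemma range_walk_arc:
  assumes "p \<in> X"
  shows "range (\<lambda>k. walk_arc k p) = (\<lambda>k. walk_arc k p) ` {..<period p}"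
proof (intro equalityI subsetI)
  fix f assume "f \<in> range (\<lambda>k. walk_arc k p)"
  then obtain k where "f = walk_arc (k mod period p) p"
    using walk_arc_mod_period[OF assms] by blast
  moreover have "k mod period p < period p" using period_pos[OF assms] by simp
  ultimately show "f \<in> (\<lambda>k. walk_arc k p) ` {..<period p}" by blast
qed blast

lemma apsnd_mirror_walk_arc: "p \<in> X \<Longrightarrow> apsnd mirror (walk_arc k p) = walk_arc k (- p)"
  by (simp add: walk_arc_def mirror_arc walk_uminus del: walk.simps)

lemma crosses_zero_walk_arc:
  assumes "p \<in> X"
  shows "crosses_zero (snd (walk_arc k p)) \<longleftrightarrow> (walk k p < 0) \<noteq> (walk (Suc k) p < 0)"
proof -
  have "walk k p \<noteq> 0" "walk (Suc k) p \<noteq> 0"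
    using walk_mem[OF assms] cup.zero_notin by metis+
  then show ?thesis
    by (auto simp: crosses_zero_def walk_arc_def arc_def min_def max_def simp del: walk.simps)
qed

lemma card_crossing_walk_arcs:
  assumes "p \<in> X"
  shows "card {f \<in> range (\<lambda>k. walk_arc k p). crosses_zero (snd f)}
    = card {k. k < period p \<and> (walk k p < 0) \<noteq> (walk (Suc k) p < 0)}"
proof -
  have "{f \<in> range (\<lambda>k. walk_arc k p). crosses_zero (snd f)}
      = (\<lambda>k. walk_arc k p) ` {k. k < period p \<and> crosses_zero (snd (walk_arc k p))}"
    unfolding range_walk_arc[OF assms] by auto
  moreover have "inj_on (\<lambda>k. walk_arc k p) {k. k < period p \<and> crosses_zero (snd (walk_arc k p))}"
    using walk_arc_inj_on_period[OF assms] by (auto simp: inj_on_def)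
  ultimately show ?thesis by (simp add: card_image crosses_zero_walk_arc[OF assms])
qed

definition arcs :: "tarc set" where
  "arcs = Pair False ` U \<union> Pair True ` V"

definition touching :: "(tarc \<times> tarc) set" where
  "touching = {(f, g). f \<in> arcs \<and> g \<in> arcs \<and> share_end f g}"

definition circle :: "tarc \<Rightarrow> tarc set" where
  "circle e = {f. (e, f) \<in> touching\<^sup>*}"

lemma ends_subset_points: "f \<in> arcs \<Longrightarrow> ends (snd f) \<subseteq> X"
  using cup.arc_ends cap.arc_ends by (auto simp: arcs_def ends_def)

lemma walk_arc_mem_arcs: "p \<in> X \<Longrightarrow> walk_arc k p \<in> arcs"
  using cup.arc_mate[OF walk_mem] cap.arc_mate[OF walk_mem]
  by (auto simp: walk_arc_def step_def arcs_def)

lemma arcs_at_point: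
  assumes "q \<in> X" "g \<in> arcs" "q \<in> ends (snd g)"
  shows "g = (False, arc q (cup.mate q)) \<or> g = (True, arc q (cap.mate q))"
  using assms cup.arc_eq_arc_mate cap.arc_eq_arc_mate by (auto simp: arcs_def)

text \<open>At the point \<open>walk j p\<close> the walk passes through both the cup and the cap there: the one
  leaving it at step \<open>j\<close> and the one reaching it again after a full period.\<close>
lemma arc_mem_range_walk_arc:
  assumes "p \<in> X" "g \<in> arcs" "walk j p \<in> ends (snd g)"
  shows "g \<in> range (\<lambda>k. walk_arc k p)"
proof -
  define q where "q = walk j p"
  define m where "m = j + period p - 1"
  have "2 \<le> period p" using period_pos[OF assms(1)] even_period[OF assms(1)] by presburger
  then have m: "Suc m = period p + j" "odd m = even j"
    unfolding m_def using even_period[OF assms(1)] by auto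
  have q: "walk (Suc m) p = q"
    unfolding m(1) q_def using walk_period_add[OF assms(1), of 1 j] by simp
  then have "walk m p = step m q" using step_walk_Suc[OF assms(1), of m] by simp
  then have "walk_arc j p = (odd j, arc q (step j q))" "walk_arc m p = (even j, arc q (step m q))"
    using q m(2) by (auto simp: walk_arc_def q_def arc_commute)
  moreover have "step j = (if even j then cup.mate else cap.mate)"
    "step m = (if even j then cap.mate else cup.mate)"
    using m(2) by (auto simp: step_def)
  moreover have "g = (False, arc q (cup.mate q)) \<or> g = (True, arc q (cap.mate q))"
    using arcs_at_point[OF walk_mem[OF assms(1)] assms(2,3)] unfolding q_def .
  ultimately have "g = walk_arc j p \<or> g = walk_arc m p" by (cases "even j") auto
  then show ?thesis by blast
qed

lemma circle_eq_range_walk_arc: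
  assumes "e \<in> arcs" "p \<in> ends (snd e)"
  shows "circle e = range (\<lambda>k. walk_arc k p)"
proof (intro equalityI subsetI)
  have p: "p \<in> X" using ends_subset_points[OF assms(1)] assms(2) by blast
  fix f assume "f \<in> circle e"
  then have "(e, f) \<in> touching\<^sup>*" by (simp add: circle_def)
  then show "f \<in> range (\<lambda>k. walk_arc k p)"
  proof (induction rule: rtrancl_induct)
    case base
    show ?case using arc_mem_range_walk_arc[OF p assms(1), of 0] assms(2) by simp
  next
    case (step g h)
    then obtain k where "g = walk_arc k p" by blast
    moreover obtain q where "q \<in> ends (snd g)" "q \<in> ends (snd h)" "h \<in> arcs"
      using step(2) by (auto simp: touching_def share_end_iff)
    ultimately show ?case
      using arc_mem_range_walk_arc[OF p, of h k] arc_mem_range_walk_arc[OF p, of h "Suc k"]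
      by (auto simp: ends_walk_arc simp del: walk.simps)
  qed
next
  have p: "p \<in> X" using ends_subset_points[OF assms(1)] assms(2) by blast
  fix f assume "f \<in> range (\<lambda>k. walk_arc k p)"
  then obtain k where f: "f = walk_arc k p" by blast
  have "(e, walk_arc k p) \<in> touching\<^sup>*"
  proof (induction k)
    case 0
    have "p \<in> ends (snd (walk_arc 0 p))" by (simp add: ends_walk_arc)
    then have "(e, walk_arc 0 p) \<in> touching"
      using assms walk_arc_mem_arcs[OF p, of 0] unfolding touching_def share_end_iff by blast
    then show ?case by (rule r_into_rtrancl)
  next
    case (Suc k)
    have "walk (Suc k) p \<in> ends (snd (walk_arc k p)) \<inter> ends (snd (walk_arc (Suc k) p))"
      by (simp add: ends_walk_arc del: walk.simps)
    then have "(walk_arc k p, walk_arc (Suc k) p) \<in> touching"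
      using walk_arc_mem_arcs[OF p, of k] walk_arc_mem_arcs[OF p, of "Suc k"]
      unfolding touching_def share_end_iff by blast
    with Suc show ?case by (rule rtrancl_into_rtrancl)
  qed
  then show "f \<in> circle e" by (simp add: circle_def f)
qed

lemma circle_subset_arcs:
  assumes "e \<in> arcs"
  shows "circle e \<subseteq> arcs"
proof -
  have "fst (snd e) \<in> X" using ends_subset_points[OF assms] by (simp add: ends_def)
  then show ?thesis
    using circle_eq_range_walk_arc[OF assms, of "fst (snd e)"] walk_arc_mem_arcs
    by (auto simp: ends_def)
qed

lemma circle_eq_circle:
  assumes "e \<in> arcs" "f \<in> circle e"
  shows "circle f = circle e"
proof -
  have "sym touching" by (auto simp: sym_def touching_def share_end_def)
  moreover have "(f, e) \<in> (touching\<inverse>)\<^sup>*"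
    using assms(2) by (simp add: circle_def rtrancl_converseI)
  ultimately have "(f, e) \<in> touching\<^sup>*" by (simp add: sym_conv_converse_eq)
  then show ?thesis using assms(2) unfolding circle_def by (blast intro: rtrancl_trans)
qed

lemma circle_eq_range_walk_arc_at:
  assumes "e \<in> arcs" "g \<in> circle e" "q \<in> ends (snd g)"
  shows "circle e = range (\<lambda>k. walk_arc k q)"
  using circle_eq_range_walk_arc[of g q] circle_eq_circle[OF assms(1,2)]
    circle_subset_arcs[OF assms(1)] assms(2,3) by blast

lemma apsnd_mirror_mem_circle:
  assumes "e \<in> arcs" "l \<in> circle e" "apsnd mirror l \<in> circle e" "f \<in> circle e"
  shows "apsnd mirror f \<in> circle e"
proof -
  define q where "q = fst (snd l)"
  have q: "q \<in> ends (snd l)" "- q \<in> ends (snd (apsnd mirror l))"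
    by (auto simp: q_def ends_def mirror_def)
  have "q \<in> X" using ends_subset_points circle_subset_arcs assms(1,2) q(1) by blast
  obtain k where "f = walk_arc k q"
    using circle_eq_range_walk_arc_at[OF assms(1,2) q(1)] assms(4) by blast
  then have "apsnd mirror f = walk_arc k (- q)" using apsnd_mirror_walk_arc[OF \<open>q \<in> X\<close>] by simp
  then show ?thesis using circle_eq_range_walk_arc_at[OF assms(1,3) q(2)] by simp
qed

text \<open>The walk returns to its start after a period, so its sign changes an even number of times.\<close>
lemma even_card_crossing_circle:
  assumes "e \<in> arcs"
  shows "even (card {f \<in> circle e. crosses_zero (snd f)})"
proof -
  define p where "p = fst (snd e)"
  have "p \<in> ends (snd e)" by (simp add: p_def ends_def)
  then have p: "p \<in> X" "circle e = range (\<lambda>k. walk_arc k p)"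
    using ends_subset_points[OF assms] circle_eq_range_walk_arc[OF assms] by auto
  show ?thesis
    using card_crossing_walk_arcs[OF p(1)] even_card_changes_iff[of "period p" "\<lambda>k. walk k p < 0"]
      walk_period[OF p(1)] p(2) by simp
qed

text \<open>A circle through \<open>p\<close> and \<open>-p\<close> is symmetric: walking from \<open>p\<close> to \<open>-p\<close> takes half a period.\<close>
lemma period_eq_double:
  assumes "p \<in> X" "walk b p = - p" "b < period p"
  shows "period p = 2 * b" and "even b"
proof -
  show b: "even b" using walk_odd_neq_uminus[OF assms(1)] assms(2) by blast
  have "b \<noteq> 0"
  proof
    assume "b = 0"
    then have "p = 0" using assms(2) by simp
    then show False using assms(1) cup.zero_notin by simp
  qed
  have "walk (b + b) p = p"
    using walk_add[OF b, of b p] assms(2) walk_uminus[OF assms(1)] by simp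
  show "period p = 2 * b"
  proof (rule ccontr)
    assume ne: "period p \<noteq> 2 * b"
    show False
    proof (cases "2 * b < period p")
      case True
      then show False using walk_less_period_neq \<open>walk (b + b) p = p\<close> \<open>b \<noteq> 0\<close> by (simp add: mult_2)
    next
      case False
      then have "b + b = 1 * period p + (b + b - period p)" by simp
      then have "walk (b + b - period p) p = p"
        using walk_period_add[OF assms(1), of 1] \<open>walk (b + b) p = p\<close> by metis
      then show False using walk_less_period_neq[of "b + b - period p" p] False ne assms(3) by simp
    qed
  qed
qed

text \<open>For a circle containing an arc and its mirror image, the walk from \<open>q\<close> is antiperiodic
  with antiperiod half its period.\<close>
lemma card_crossing_mirror_closed_circle:
  assumes "e \<in> arcs" "l \<in> circle e" "apsnd mirror l \<in> circle e"
  shows "card {f \<in> circle e. crosses_zero (snd f)} mod 4 = 2"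
proof -
  define q where "q = fst (snd l)"
  have q: "q \<in> ends (snd l)" "- q \<in> ends (snd (apsnd mirror l))"
    by (auto simp: q_def ends_def mirror_def)
  have qX: "q \<in> X" using ends_subset_points circle_subset_arcs assms(1,2) q(1) by blast
  have C: "circle e = range (\<lambda>k. walk_arc k q)"
    by (rule circle_eq_range_walk_arc_at[OF assms(1,2) q(1)])
  obtain k where "apsnd mirror l = walk_arc k q" using assms(3) C by blast
  then have "- q = walk k q \<or> - q = walk (Suc k) q" using q(2) by (auto simp: ends_walk_arc)
  then obtain b0 where "walk b0 q = - q" by metis
  define b where "b = b0 mod period q"
  have b: "walk b q = - q" "b < period q"
    using \<open>walk b0 q = - q\<close> walk_mod_period[OF qX, of b0] period_pos[OF qX] by (auto simp: b_def)
  note period = period_eq_double[OF qX b]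
  have "(walk (b + k) q < 0) = (\<not> walk k q < 0)" for k
  proof -
    have "walk k q \<noteq> 0" using walk_mem[OF qX] cup.zero_notin by metis
    moreover have "walk (b + k) q = - walk k q"
      using walk_add[OF period(2)] b(1) walk_uminus[OF qX] by simp
    ultimately show ?thesis by (cases "walk k q < 0") auto
  qed
  then have "card {k. k < 2 * b \<and> (walk k q < 0) \<noteq> (walk (Suc k) q < 0)} mod 4 = 2"
    by (rule card_changes_antiperiodic)
  then show ?thesis
    using card_crossing_walk_arcs[OF qX] period(1) C by (simp del: walk.simps)
qed

definition linked :: "tarc set set" where
  "linked = (\<lambda>l. {l, apsnd mirror l}) ` {l \<in> arcs. crosses_zero (snd l)}"

lemma apsnd_mirror_neq: "f \<in> arcs \<Longrightarrow> apsnd mirror f \<noteq> f"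
  using cup.mirror_neq cap.mirror_neq by (auto simp: arcs_def)

lemma linked_met_eq:
  assumes "e \<in> arcs"
  shows "{L \<in> linked. meets (circle e) L}
    = (\<lambda>f. {f, apsnd mirror f}) ` {f \<in> circle e. crosses_zero (snd f)}"
proof (intro equalityI subsetI)
  fix L assume "L \<in> {L \<in> linked. meets (circle e) L}"
  then obtain l f where l: "crosses_zero (snd l)" "L = {l, apsnd mirror l}"
    and f: "f \<in> L" "f \<in> circle e"
    unfolding linked_def meets_def by blast
  then have "f = l \<or> f = apsnd mirror l" by blast
  then have "L = {f, apsnd mirror f}" "crosses_zero (snd f)"
    using l by (auto simp del: apsnd_conv)
  with f(2) show "L \<in> (\<lambda>f. {f, apsnd mirror f}) ` {f \<in> circle e. crosses_zero (snd f)}" by blast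
qed (use circle_subset_arcs[OF assms] in \<open>auto simp: linked_def meets_def\<close>)

lemma circle_linked_dichotomy:
  assumes "e \<in> arcs"
  shows "(\<forall>L \<in> linked. meets (circle e) L \<longrightarrow> L \<subseteq> circle e)
    \<or> (\<forall>L \<in> linked. meets (circle e) L \<longrightarrow> card (L \<inter> circle e) = 1)"
proof -
  have L: "\<exists>f \<in> circle e. L = {f, apsnd mirror f}" if "L \<in> linked" "meets (circle e) L" for L
    using that linked_met_eq[OF assms] by blast
  show ?thesis
  proof (cases "\<exists>l \<in> circle e. apsnd mirror l \<in> circle e")
    case True
    then have "L \<subseteq> circle e" if "L \<in> linked" "meets (circle e) L" for L
      using L[OF that] apsnd_mirror_mem_circle[OF assms] by blast
    then show ?thesis by blast
  next
    case False
    then have "L \<inter> circle e = {f}" if "f \<in> circle e" "L = {f, apsnd mirror f}" for L f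
      using that by blast
    then have "card (L \<inter> circle e) = 1" if "L \<in> linked" "meets (circle e) L" for L
      using L[OF that] by (metis is_singletonI is_singleton_altdef)
    then show ?thesis by blast
  qed
qed

lemma even_card_linked_met:
  assumes "e \<in> arcs" "\<forall>L \<in> linked. meets (circle e) L \<longrightarrow> card (L \<inter> circle e) = 1"
  shows "even (card {L \<in> linked. meets (circle e) L})"
proof -
  let ?Cr = "{f \<in> circle e. crosses_zero (snd f)}"
  have "inj_on (\<lambda>f. {f, apsnd mirror f}) ?Cr"
  proof (rule inj_onI)
    fix f g assume fg: "f \<in> ?Cr" "g \<in> ?Cr" "{f, apsnd mirror f} = {g, apsnd mirror g}"
    show "f = g"
    proof (rule ccontr)
      assume "f \<noteq> g"
      then have "{g, apsnd mirror g} \<inter> circle e = {g, apsnd mirror g}" using fg by auto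
      moreover have "apsnd mirror g \<noteq> g"
        using apsnd_mirror_neq circle_subset_arcs[OF assms(1)] fg(2) by blast
      moreover have "{g, apsnd mirror g} \<in> {L \<in> linked. meets (circle e) L}"
        using linked_met_eq[OF assms(1)] fg(2) by blast
      ultimately show False using assms(2) by auto
    qed
  qed
  then show ?thesis
    using linked_met_eq[OF assms(1)] even_card_crossing_circle[OF assms(1)] by (simp add: card_image)
qed

lemma odd_card_linked_met:
  assumes "e \<in> arcs" "\<exists>L \<in> linked. meets (circle e) L"
    and contained: "\<forall>L \<in> linked. meets (circle e) L \<longrightarrow> L \<subseteq> circle e"
  shows "odd (card {L \<in> linked. meets (circle e) L})"
proof -
  let ?Cr = "{f \<in> circle e. crosses_zero (snd f)}"
  let ?M = "{L \<in> linked. meets (circle e) L}"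
  have M: "?M = (\<lambda>f. {f, apsnd mirror f}) ` ?Cr" by (rule linked_met_eq[OF assms(1)])
  have "?Cr = \<Union> ?M"
  proof (intro equalityI subsetI)
    fix f assume "f \<in> ?Cr"
    then show "f \<in> \<Union> ?M" unfolding M by blast
  next
    fix g assume "g \<in> \<Union> ?M"
    then obtain f where f: "f \<in> ?Cr" "g \<in> {f, apsnd mirror f}" unfolding M by blast
    moreover have "{f, apsnd mirror f} \<subseteq> circle e" using contained M f(1) by blast
    ultimately show "g \<in> ?Cr" by (auto simp del: apsnd_conv)
  qed
  moreover have two: "card L = 2" if L: "L \<in> ?M" for L
  proof -
    obtain f where "f \<in> circle e" "L = {f, apsnd mirror f}" using L unfolding M by blast
    moreover from this have "apsnd mirror f \<noteq> f"
      using apsnd_mirror_neq circle_subset_arcs[OF assms(1)] by blast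
    ultimately show ?thesis by simp
  qed
  moreover have "pairwise disjnt ?M"
  proof (rule pairwiseI)
    have pair_eq: "{x, apsnd mirror x} = {f, apsnd mirror f}" if "x \<in> {f, apsnd mirror f}" for x f
      using that by (auto simp del: apsnd_conv)
    fix L1 L2 assume "L1 \<in> ?M" "L2 \<in> ?M" "L1 \<noteq> L2"
    then obtain f g where "L1 = {f, apsnd mirror f}" "L2 = {g, apsnd mirror g}" unfolding M by blast
    then show "disjnt L1 L2"
      using pair_eq[of _ f] pair_eq[of _ g] \<open>L1 \<noteq> L2\<close> unfolding disjnt_def by blast
  qed
  moreover have "finite L" if "L \<in> ?M" for L
    using two[OF that] by (intro card_ge_0_finite) simp
  ultimately have "card ?Cr = 2 * card ?M"
    using card_Union_disjoint[of ?M] two by (simp add: mult.commute)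
  moreover obtain L where "L \<in> ?M" using assms(2) by blast
  then obtain l where "l \<in> circle e" "L = {l, apsnd mirror l}" unfolding M by blast
  moreover from this have "apsnd mirror l \<in> circle e" using contained \<open>L \<in> ?M\<close> by blast
  ultimately have "2 * card ?M mod 4 = 2"
    using card_crossing_mirror_closed_circle[OF assms(1)] by simp
  then show ?thesis by presburger
qed

end

section \<open>The cup diagram of a sign sequence\<close>

lemma Pts_iff: "x \<in> Pts n \<longleftrightarrow> - 2 * int n \<le> x \<and> x \<le> 2 * int n \<and> x \<noteq> 0"
  by (auto simp: Pts_def)

lemma finite_Pts: "finite (Pts n)"
  by (simp add: Pts_def)

lemma zero_notin_Pts: "0 \<notin> Pts n"
  by (simp add: Pts_def)

lemma uminus_mem_Pts: "x \<in> Pts n \<Longrightarrow> - x \<in> Pts n"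
  by (auto simp: Pts_iff)

lemma lab_uminus: "x \<in> Pts n \<Longrightarrow> lab n al (- x) \<longleftrightarrow> \<not> lab n al x"
  by (auto simp: lab_def Pts_iff)

locale cup_diagram =
  fixes n :: nat and al :: "nat \<Rightarrow> bool"
begin

abbreviation up :: "int \<Rightarrow> bool" where
  "up \<equiv> lab n al"

definition weight :: "int \<Rightarrow> int" where
  "weight j = (if up j then 1 else -1)"

text \<open>Reading \<open>+\<close> as an up-step and \<open>-\<close> as a down-step, \<open>height t\<close> is the height of the
  resulting lattice path after the points \<open>\<le> t\<close>.\<close>
definition height :: "int \<Rightarrow> int" where
  "height t = (\<Sum>j \<in> {j \<in> Pts n. j \<le> t}. weight j)"

lemma weight_uminus: "j \<in> Pts n \<Longrightarrow> weight (- j) = - weight j"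
  by (simp add: weight_def lab_uminus)

lemma sum_weight_eq: "finite S \<Longrightarrow> (\<Sum>j\<in>S. weight j) = int (card {j\<in>S. up j}) - int (card {j\<in>S. \<not> up j})"
  by (simp add: weight_def sum.If_cases Int_def)

lemma height_split:
  assumes "s \<le> t"
  shows "height t = height s + (\<Sum>j \<in> {j \<in> Pts n. s < j \<and> j \<le> t}. weight j)"
proof -
  have "{j \<in> Pts n. j \<le> t} = {j \<in> Pts n. j \<le> s} \<union> {j \<in> Pts n. s < j \<and> j \<le> t}" using assms by auto
  moreover have "{j \<in> Pts n. j \<le> s} \<inter> {j \<in> Pts n. s < j \<and> j \<le> t} = {}" by auto
  ultimately show ?thesis unfolding height_def by (simp add: sum.union_disjoint finite_Pts)
qed

lemma height_step: "height t = height (t - 1) + (if t \<in> Pts n then weight t else 0)"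
proof -
  have "t - 1 < j \<and> j \<le> t \<longleftrightarrow> j = t" for j :: int by arith
  then have "{j \<in> Pts n. t - 1 < j \<and> j \<le> t} = (if t \<in> Pts n then {t} else {})" by auto
  then show ?thesis using height_split[of "t - 1" t] by simp
qed

lemma height_up: "a \<in> Pts n \<Longrightarrow> up a \<Longrightarrow> height a = height (a - 1) + 1"
  and height_down: "a \<in> Pts n \<Longrightarrow> \<not> up a \<Longrightarrow> height a = height (a - 1) - 1"
  and height_notin: "a \<notin> Pts n \<Longrightarrow> height a = height (a - 1)"
  using height_step[of a] by (simp_all add: weight_def)

lemma height_below: "t < - 2 * int n \<Longrightarrow> height t = 0"
proof -
  assume "t < - 2 * int n"
  then have "{j \<in> Pts n. j \<le> t} = {}" by (auto simp: Pts_iff)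
  then show ?thesis unfolding height_def by (simp only: sum.empty)
qed

lemma sum_weight_uminus: "(\<Sum>j \<in> {j \<in> Pts n. P (- j)}. weight j) = - (\<Sum>j \<in> {j \<in> Pts n. P j}. weight j)"
proof -
  have "{j \<in> Pts n. P (- j)} = uminus ` {j \<in> Pts n. P j}"
    by (auto simp: uminus_mem_Pts image_iff) (metis minus_minus uminus_mem_Pts)
  then have "(\<Sum>j \<in> {j \<in> Pts n. P (- j)}. weight j) = (\<Sum>j \<in> {j \<in> Pts n. P j}. weight (- j))"
    by (simp add: sum.reindex inj_on_def)
  then show ?thesis by (simp add: weight_uminus sum_negf)
qed

lemma height_above: "2 * int n \<le> t \<Longrightarrow> height t = 0"
proof -
  assume "2 * int n \<le> t"
  then have "{j \<in> Pts n. j \<le> t} = {j \<in> Pts n. True}" by (auto simp: Pts_iff)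
  then show ?thesis using sum_weight_uminus[of "\<lambda>_. True"] by (simp add: height_def)
qed

text \<open>The labels are antisymmetric, so the path is symmetric about \<open>-1/2\<close>.\<close>
lemma height_reflect: "height t = height (- t - 1)"
proof -
  have "height (2 * int n + \<bar>t\<bar>) = height t + (\<Sum>j \<in> {j \<in> Pts n. t < j \<and> j \<le> 2 * int n + \<bar>t\<bar>}. weight j)"
    by (rule height_split) simp
  moreover have "{j \<in> Pts n. t < j \<and> j \<le> 2 * int n + \<bar>t\<bar>} = {j \<in> Pts n. t < - (- j)}"
    by (auto simp: Pts_iff)
  moreover have "{j \<in> Pts n. t < - j} = {j \<in> Pts n. j \<le> - t - 1}" by auto
  moreover have "height (2 * int n + \<bar>t\<bar>) = 0" by (rule height_above) simp
  ultimately show ?thesis using sum_weight_uminus[of "\<lambda>j. t < - j"] by (simp add: height_def)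
qed

lemma height_nonneg: "0 \<le> height t"
proof -
  have neg: "0 \<le> height t" if "t \<le> -1" for t
  proof (cases "t < - int n")
    case True
    then have "height t = (\<Sum>j \<in> {j \<in> Pts n. j \<le> t}. 1)"
      unfolding height_def by (intro sum.cong) (auto simp: weight_def lab_def)
    then show ?thesis by simp
  next
    case False
    have "{j \<in> Pts n. j \<le> - int n - 1} = {- 2 * int n .. - int n - 1}" by (auto simp: Pts_iff)
    moreover have "height (- int n - 1) = (\<Sum>j \<in> {j \<in> Pts n. j \<le> - int n - 1}. 1)"
      unfolding height_def by (intro sum.cong) (auto simp: weight_def lab_def)
    ultimately have "height (- int n - 1) = int n" by simp
    moreover define S where "S = {j \<in> Pts n. - int n - 1 < j \<and> j \<le> t}"
    have "card S \<le> card {- int n .. -1}"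
      using that by (intro card_mono) (auto simp: S_def)
    moreover have "- int (card S) \<le> (\<Sum>j\<in>S. weight j)"
      using sum_mono[of S "\<lambda>_. -1" weight] by (simp add: weight_def)
    ultimately show ?thesis using height_split[of "- int n - 1" t] False by (simp add: S_def)
  qed
  show ?thesis using neg[of t] neg[of "- t - 1"] height_reflect[of t] by (cases "t \<le> -1") auto
qed

text \<open>The arc from an up-step \<open>a\<close> of the non-crossing matching ends at the first \<open>b\<close> where the
  path drops below the height at \<open>a\<close>.\<close>
definition matched :: "int \<Rightarrow> int \<Rightarrow> bool" where
  "matched a b \<longleftrightarrow> a \<in> Pts n \<and> up a \<and> a < b \<and> height b < height a \<and>
     (\<forall>t. a \<le> t \<and> t < b \<longrightarrow> height a \<le> height t)"

lemma matched_right_end: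
  assumes "matched a b"
  shows "b \<in> Pts n" "\<not> up b" "height b = height a - 1" "height (b - 1) = height a"
proof -
  have ab: "a < b" "height b < height a" "height a \<le> height (b - 1)"
    using assms by (auto simp: matched_def)
  show b: "b \<in> Pts n" using height_notin[of b] ab by (cases "b \<in> Pts n") auto
  show "\<not> up b" using height_up[OF b] ab by auto
  then show "height b = height a - 1" "height (b - 1) = height a"
    using height_down[OF b] ab by auto
qed

lemma matched_right_unique: "matched a b \<Longrightarrow> matched a b' \<Longrightarrow> b = b'"
  unfolding matched_def by (meson linorder_neqE not_le order.strict_implies_order)

lemma matched_left_unique:
  assumes "matched a b" "matched a' b"
  shows "a = a'"
proof -
  have "False" if "matched x b" "matched x' b" "x < x'" for x x'
  proof -
    have "height x \<le> height (x' - 1)" using that unfolding matched_def by auto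
    moreover have "height x' = height (x' - 1) + 1"
      using height_up that(2) unfolding matched_def by auto
    ultimately show False
      using matched_right_end(3)[OF that(1)] matched_right_end(3)[OF that(2)] by simp
  qed
  then show ?thesis using assms by (metis linorder_neqE)
qed

lemma matched_right_exists:
  assumes "a \<in> Pts n" "up a"
  shows "\<exists>b. matched a b"
proof -
  define S where "S = {t. a < t \<and> t \<le> 2 * int n \<and> height t < height a}"
  have "1 \<le> height a" using height_up[OF assms] height_nonneg[of "a - 1"] by simp
  moreover have "a < 2 * int n"
    using assms by (auto simp: Pts_iff lab_def order.order_iff_strict)
  ultimately have "2 * int n \<in> S" by (simp add: S_def height_above)
  moreover have "finite S" by (rule finite_subset[of _ "{a .. 2 * int n}"]) (auto simp: S_def)
  ultimately have m: "Min S \<in> S" "\<And>t. t \<in> S \<Longrightarrow> Min S \<le> t" using Min_in by auto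
  have "height a \<le> height t" if "a \<le> t" "t < Min S" for t
  proof (rule ccontr)
    assume "\<not> height a \<le> height t"
    then have "t \<in> S" using that m(1) by (auto simp: S_def order.order_iff_strict)
    then show False using m(2) that(2) by fastforce
  qed
  then have "matched a (Min S)" using m(1) assms by (auto simp: matched_def S_def)
  then show ?thesis by blast
qed

lemma last_rise_to:
  assumes "1 \<le> v" "- 2 * int n - 1 \<le> u" "v \<le> height u"
  shows "\<exists>x \<le> u. x \<in> Pts n \<and> up x \<and> height x = v \<and> (\<forall>t. x \<le> t \<and> t \<le> u \<longrightarrow> v \<le> height t)"
proof -
  define S where "S = {t. - 2 * int n - 1 \<le> t \<and> t \<le> u \<and> height t < v}"
  have "- 2 * int n - 1 \<in> S" unfolding S_def using assms height_below[of "- 2 * int n - 1"] by simp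
  moreover have "finite S" by (rule finite_subset[of _ "{- 2 * int n - 1 .. u}"]) (auto simp: S_def)
  ultimately have m: "Max S \<in> S" "\<And>t. t \<in> S \<Longrightarrow> t \<le> Max S" using Max_in by auto
  define x where "x = Max S + 1"
  have "Max S \<noteq> u" using m(1) assms(3) by (auto simp: S_def)
  then have xu: "x \<le> u" using m(1) by (simp add: S_def x_def)
  have above: "v \<le> height t" if "x \<le> t" "t \<le> u" for t
  proof (rule ccontr)
    assume "\<not> v \<le> height t"
    then have "t \<in> S" using that m(1) by (auto simp: S_def x_def)
    then show False using m(2) that(1) by (fastforce simp: x_def)
  qed
  have hx: "v \<le> height x" "height (x - 1) < v" using above xu m(1) by (auto simp: S_def x_def)
  have xP: "x \<in> Pts n" using height_notin[of x] hx by (cases "x \<in> Pts n") auto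
  have "up x" using height_down[OF xP] hx by (cases "up x") auto
  moreover have "height x = v" using height_up[OF xP \<open>up x\<close>] hx by simp
  ultimately show ?thesis using xu xP above by blast
qed

lemma matched_left_exists:
  assumes "b \<in> Pts n" "\<not> up b"
  shows "\<exists>a. matched a b"
proof -
  have hb: "height (b - 1) = height b + 1" using height_down[OF assms] by simp
  moreover have "- 2 * int n - 1 \<le> b - 1" using assms(1) by (simp add: Pts_iff)
  ultimately obtain x where "x \<le> b - 1" "x \<in> Pts n" "up x" "height x = height (b - 1)"
    "\<forall>t. x \<le> t \<and> t \<le> b - 1 \<longrightarrow> height (b - 1) \<le> height t"
    using last_rise_to[of "height (b - 1)" "b - 1"] height_nonneg[of b] by auto
  then have "matched x b" unfolding matched_def using hb by auto
  then show ?thesis by blast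
qed

lemma matched_non_crossing: "matched a b \<Longrightarrow> matched c d \<Longrightarrow> \<not> (a < c \<and> c < b \<and> b < d)"
  unfolding matched_def by (meson less_imp_le not_le order.strict_trans1)

lemma matched_mirror:
  assumes "matched a b"
  shows "matched (- b) (- a)"
proof -
  have a: "a \<in> Pts n" "up a" "a < b" "\<forall>t. a \<le> t \<and> t < b \<longrightarrow> height a \<le> height t"
    using assms by (auto simp: matched_def)
  note b = matched_right_end[OF assms]
  have "height (- b) = height a" using height_reflect[of "- b"] b(4) by simp
  moreover have "height (- a) = height a - 1" using height_reflect[of "- a"] height_up[OF a(1,2)] by simp
  moreover have "height a \<le> height t" if "- b \<le> t" "t < - a" for t
  proof -
    have "a \<le> - t - 1" "- t - 1 < b" using that by auto
    then show ?thesis using a(4) height_reflect[of t] by simp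
  qed
  ultimately show ?thesis
    using a b uminus_mem_Pts lab_uminus unfolding matched_def by auto
qed

definition height_matching :: "(int \<times> int) set" where
  "height_matching = {(a, b). matched a b}"

lemma nc_matching_height_matching: "nc_matching n al height_matching"
proof -
  have arcs: "\<forall>(x, y) \<in> height_matching. x \<in> Pts n \<and> y \<in> Pts n \<and> x < y \<and> up x \<and> \<not> up y"
  proof
    fix e assume "e \<in> height_matching"
    then obtain x y where e: "e = (x, y)" "matched x y" unfolding height_matching_def by blast
    then have "x \<in> Pts n" "up x" "x < y" by (simp_all add: matched_def)
    then show "case e of (x, y) \<Rightarrow> x \<in> Pts n \<and> y \<in> Pts n \<and> x < y \<and> up x \<and> \<not> up y"
      using e matched_right_end(1,2)[OF e(2)] by simp
  qed
  have unique: "\<exists>!e. e \<in> height_matching \<and> (p = fst e \<or> p = snd e)" if p: "p \<in> Pts n" for p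
  proof (cases "up p")
    case True
    then obtain b where b: "matched p b" using matched_right_exists[OF p] by blast
    show ?thesis
    proof (rule ex1I[of _ "(p, b)"])
      fix e assume e: "e \<in> height_matching \<and> (p = fst e \<or> p = snd e)"
      then obtain x y where xy: "e = (x, y)" "matched x y" by (auto simp: height_matching_def)
      then have "x = p" using e matched_right_end(2)[OF xy(2)] True by auto
      then show "e = (p, b)" using xy matched_right_unique[OF b] by simp
    qed (use b in \<open>simp add: height_matching_def\<close>)
  next
    case False
    then obtain a where a: "matched a p" using matched_left_exists[OF p] by blast
    show ?thesis
    proof (rule ex1I[of _ "(a, p)"])
      fix e assume e: "e \<in> height_matching \<and> (p = fst e \<or> p = snd e)"
      then obtain x y where xy: "e = (x, y)" "matched x y" by (auto simp: height_matching_def)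
      then have "y = p" using e False by (auto simp: matched_def)
      then show "e = (a, p)" using xy matched_left_unique[OF a] by simp
    qed (use a in \<open>simp add: height_matching_def\<close>)
  qed
  have "\<forall>(a, b) \<in> height_matching. \<forall>(c, d) \<in> height_matching. \<not> (a < c \<and> c < b \<and> b < d)"
    using matched_non_crossing by (auto simp: height_matching_def)
  with arcs unique show ?thesis unfolding nc_matching_def by blast
qed

lemma perfect_matching_nc_matching: "nc_matching n al M \<Longrightarrow> perfect_matching (Pts n) M"
  unfolding nc_matching_def perfect_matching_def ends_def by (simp split: prod.splits)

lemma nc_matching_arcD:
  assumes "nc_matching n al M" "(a, b) \<in> M"
  shows "a \<in> Pts n" "b \<in> Pts n" "a < b" "up a" "\<not> up b"
    and "(c, d) \<in> M \<Longrightarrow> \<not> (a < c \<and> c < b \<and> b < d)"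
proof -
  have "\<forall>(x, y) \<in> M. x \<in> Pts n \<and> y \<in> Pts n \<and> x < y \<and> up x \<and> \<not> up y"
    using assms(1) unfolding nc_matching_def by (rule conjunct1)
  moreover have nc: "\<forall>(a, b) \<in> M. \<forall>(c, d) \<in> M. \<not> (a < c \<and> c < b \<and> b < d)"
    using assms(1) unfolding nc_matching_def by (elim conjE)
  ultimately show "a \<in> Pts n" "b \<in> Pts n" "a < b" "up a" "\<not> up b" using assms(2) by auto
  show "(c, d) \<in> M \<Longrightarrow> \<not> (a < c \<and> c < b \<and> b < d)" using nc assms(2) by blast
qed

lemma nc_matching_mate:
  assumes M: "nc_matching n al M" and j: "j \<in> Pts n"
  shows "up j \<Longrightarrow> (j, perfect_matching.mate M j) \<in> M"
    and "\<not> up j \<Longrightarrow> (perfect_matching.mate M j, j) \<in> M"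
proof -
  interpret M: perfect_matching "Pts n" M by (rule perfect_matching_nc_matching[OF M])
  have "arc j (M.mate j) \<in> M" by (rule M.arc_mate[OF j])
  moreover have "arc j (M.mate j) = (j, M.mate j) \<or> arc j (M.mate j) = (M.mate j, j)"
    by (auto simp: arc_def)
  ultimately show "up j \<Longrightarrow> (j, M.mate j) \<in> M" "\<not> up j \<Longrightarrow> (M.mate j, j) \<in> M"
    using nc_matching_arcD(4,5)[OF M] by metis+
qed

lemma nc_matching_mate_between:
  assumes M: "nc_matching n al M" and ab: "(a, b) \<in> M" and j: "j \<in> Pts n" "a < j" "j < b"
  shows "a < perfect_matching.mate M j \<and> perfect_matching.mate M j < b"
proof -
  interpret M: perfect_matching "Pts n" M by (rule perfect_matching_nc_matching[OF M])
  obtain c d where cd: "arc j (M.mate j) = (c, d)" by fastforce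
  have cd_mem: "(c, d) \<in> M" using M.arc_mate[OF j(1)] cd by simp
  moreover have "{c, d} = {j, M.mate j}" using ends_arc[of j "M.mate j"] cd by (simp add: ends_def)
  ultimately have e: "(c, d) \<in> M" "j \<in> {c, d}" "M.mate j \<in> {c, d}" "c < d"
    using M.arc_ends[OF cd_mem] by auto
  have neq: "(c, d) \<noteq> (a, b)" using e(2) j by auto
  have same: "(c, d) = (a, b)" if "p \<in> {a, b}" "p \<in> {c, d}" for p
  proof -
    have "p \<in> Pts n" using that(1) M.arc_ends[OF ab] by auto
    then show ?thesis
      by (rule M.arc_at_eq[OF _ e(1) _ ab]) (use that in \<open>simp_all add: ends_def\<close>)
  qed
  have "a \<notin> {c, d}" "b \<notin> {c, d}" using same[of a] same[of b] neq by blast+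
  moreover have "\<not> (a < c \<and> c < b \<and> b < d)" "\<not> (c < a \<and> a < d \<and> d < b)"
    using nc_matching_arcD(6)[OF M ab e(1)] nc_matching_arcD(6)[OF M e(1) ab] by auto
  ultimately show ?thesis using e(2-4) j(2,3) by auto
qed

lemma nc_matching_matched:
  assumes M: "nc_matching n al M" and ab: "(a, b) \<in> M"
  shows "matched a b"
proof -
  interpret M: perfect_matching "Pts n" M by (rule perfect_matching_nc_matching[OF M])
  note a = nc_matching_arcD(1,4,3)[OF M ab] and b = nc_matching_arcD(2,5)[OF M ab]
  have between: "a < M.mate j \<and> M.mate j < b" if "j \<in> Pts n" "a < j" "j < b" for j
    by (rule nc_matching_mate_between[OF M ab that])
  text \<open>Matching each point of a set by its mate shows that it has no more \<open>P\<close>-points than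
    \<open>\<not> P\<close>-points.\<close>
  have card_le: "card {j \<in> S. P j} \<le> card {j \<in> S. \<not> P j}"
    if "S \<subseteq> Pts n" "finite S" "\<And>j. j \<in> S \<Longrightarrow> P j \<Longrightarrow> M.mate j \<in> S \<and> \<not> P (M.mate j)" for S P
  proof (rule card_inj_on_le[of M.mate])
    show "inj_on M.mate {j \<in> S. P j}"
      by (rule inj_on_inverseI[of _ M.mate]) (use M.mate_mate that(1) in blast)
  qed (use that in auto)
  have "height a \<le> height t" if t: "a \<le> t" "t < b" for t
  proof -
    define S where "S = {j \<in> Pts n. a < j \<and> j \<le> t}"
    have "M.mate j \<in> S \<and> up (M.mate j)" if "j \<in> S" "\<not> up j" for j
    proof -
      have j: "j \<in> Pts n" "a < j" "j \<le> t" using that(1) by (auto simp: S_def)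
      note arc = nc_matching_mate(2)[OF M j(1) that(2)]
      show ?thesis using nc_matching_arcD[OF M arc] between[OF j(1,2)] j t by (simp add: S_def)
    qed
    then have "card {j \<in> S. \<not> up j} \<le> card {j \<in> S. up j}"
      using card_le[of S "\<lambda>j. \<not> up j"] by (simp add: S_def finite_Pts)
    then show ?thesis
      using height_split[OF t(1)] sum_weight_eq[of S] by (simp add: S_def finite_Pts)
  qed
  moreover have "height b < height a"
  proof -
    define S where "S = {j \<in> Pts n. a < j \<and> j \<le> b - 1}"
    have "M.mate j \<in> S \<and> \<not> up (M.mate j)" if "j \<in> S" "up j" for j
    proof -
      have j: "j \<in> Pts n" "a < j" "j < b" using that(1) by (auto simp: S_def)
      note arc = nc_matching_mate(1)[OF M j(1) that(2)]
      show ?thesis using nc_matching_arcD[OF M arc] between[OF j] j by (simp add: S_def)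
    qed
    then have "card {j \<in> S. up j} \<le> card {j \<in> S. \<not> up j}"
      using card_le[of S up] by (simp add: S_def finite_Pts)
    then show ?thesis
      using height_split[of a "b - 1"] sum_weight_eq[of S] height_down[OF b] a(3)
      by (simp add: S_def finite_Pts)
  qed
  ultimately show ?thesis using a by (simp add: matched_def)
qed

lemma matching_eq_height_matching: "matching n al = height_matching"
  unfolding matching_def
proof (rule the_equality)
  fix M assume M: "nc_matching n al M"
  interpret M: perfect_matching "Pts n" M by (rule perfect_matching_nc_matching[OF M])
  show "M = height_matching"
  proof (intro equalityI subsetI)
    fix e assume "e \<in> height_matching"
    then obtain a b where e: "e = (a, b)" "matched a b" by (auto simp: height_matching_def)
    then have "(a, M.mate a) \<in> M" using nc_matching_mate(1)[OF M] by (auto simp: matched_def)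
    then show "e \<in> M" using nc_matching_matched[OF M] matched_right_unique e by metis
  qed (use nc_matching_matched[OF M] in \<open>auto simp: height_matching_def\<close>)
qed (rule nc_matching_height_matching)

sublocale hm: perfect_matching "Pts n" height_matching
  by (rule perfect_matching_nc_matching[OF nc_matching_height_matching])

lemma matched_across_zero:
  assumes "x < 0" "x \<in> Pts n" "up x" "\<forall>t. x \<le> t \<and> t \<le> -1 \<longrightarrow> height x \<le> height t"
  shows "matched x (- x)"
  unfolding matched_def
proof (intro conjI allI impI)
  have "height (- x) = height (x - 1)" using height_reflect[of "- x"] by simp
  then show "height (- x) < height x" using height_up[OF assms(2,3)] by simp
next
  fix t assume t: "x \<le> t \<and> t < - x"
  show "height x \<le> height t"
  proof (cases "t \<le> -1")
    case False
    then show ?thesis using assms(4) t height_reflect[of t] by simp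
  qed (use assms(4) t in simp)
qed (use assms in auto)

text \<open>The path is symmetric about \<open>-1/2\<close>, so an arc crossing the middle is symmetric too.\<close>
lemma matched_crossing:
  assumes "matched x y" "x < 0" "0 < y"
  shows "y = - x"
proof -
  have "x \<in> Pts n" "up x" "\<forall>t. x \<le> t \<and> t \<le> -1 \<longrightarrow> height x \<le> height t"
    using assms unfolding matched_def by auto
  then show ?thesis using matched_right_unique[OF assms(1) matched_across_zero] assms(2) by blast
qed

lemma crossing_arcs_height_matching:
  "crossing_arcs height_matching = {(- y, y) | y. 0 < y \<and> matched (- y) y}"
  using matched_crossing by (fastforce simp: crossing_arcs_def height_matching_def)

abbreviation ys :: "int list" where
  "ys \<equiv> ys_of n al"

lemma set_ys: "set ys = {y. 0 < y \<and> matched (- y) y}"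
proof -
  have "snd ` crossing_arcs height_matching = {y. 0 < y \<and> matched (- y) y}"
    unfolding crossing_arcs_height_matching by force
  moreover have "finite {y. 0 < y \<and> matched (- y) y}"
    using matched_right_end(1) finite_Pts by (auto intro: finite_subset)
  ultimately show ?thesis by (simp add: ys_of_def matching_eq_height_matching)
qed

lemma distinct_ys: "distinct ys"
  by (simp add: ys_of_def)

lemma ys_nth:
  assumes "i < length ys"
  shows "0 < ys ! i" "ys ! i \<in> Pts n" "- (ys ! i) \<in> Pts n"
  using nth_mem[OF assms] matched_right_end(1) uminus_mem_Pts by (auto simp: set_ys)

lemma even_length_ys: "even (length ys)"
proof -
  have "{p \<in> Pts n. p < 0} = {- 2 * int n .. -1}" by (auto simp: Pts_iff)
  then have "card {p \<in> Pts n. p < 0} = 2 * n" by simp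
  then have "even (card (crossing_arcs height_matching))"
    using hm.even_card_crossing_arcs[OF finite_Pts] by (simp add: Pts_def)
  moreover have "inj_on snd (crossing_arcs height_matching)"
    unfolding crossing_arcs_height_matching by (auto intro: inj_onI)
  ultimately show ?thesis
    using distinct_ys by (simp add: ys_of_def matching_eq_height_matching card_image distinct_card)
qed

definition twin :: "nat \<Rightarrow> nat" where
  "twin i = (if even i then Suc i else i - 1)"

lemma twin_twin [simp]: "twin (twin i) = i"
  by (auto simp: twin_def elim: oddE)

lemma twin_neq: "twin i \<noteq> i"
  by (auto simp: twin_def elim: oddE)

lemma twin_less: "i < length ys \<Longrightarrow> twin i < length ys"
  using even_length_ys by (auto simp: twin_def) (metis Suc_lessI even_Suc)

definition linked_arc :: "nat \<Rightarrow> int \<times> int" where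
  "linked_arc i = (- (ys ! twin i), ys ! i)"

lemma mirror_linked_arc: "mirror (linked_arc i) = linked_arc (twin i)"
  by (simp add: linked_arc_def mirror_def)

lemma ends_linked_arc: "ends (linked_arc i) = {- (ys ! twin i), ys ! i}"
  by (simp add: linked_arc_def ends_def)

lemma crosses_zero_linked_arc: "i < length ys \<Longrightarrow> crosses_zero (linked_arc i)"
  using ys_nth twin_less by (simp add: linked_arc_def crosses_zero_def)

lemma nth_ys_eq_iff: "i < length ys \<Longrightarrow> k < length ys \<Longrightarrow> ys ! i = ys ! k \<longleftrightarrow> i = k"
  using distinct_ys by (simp add: nth_eq_iff_index_eq)

lemma linked_arc_at:
  assumes "i < length ys" "k < length ys"
  shows "ys ! i \<in> ends (linked_arc k) \<longleftrightarrow> k = i"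
    and "- (ys ! i) \<in> ends (linked_arc k) \<longleftrightarrow> k = twin i"
  using ys_nth[OF assms(1)] ys_nth[OF assms(2)] ys_nth[OF twin_less[OF assms(2)]] nth_ys_eq_iff[OF assms(1)]
    nth_ys_eq_iff[OF assms(1) twin_less[OF assms(2)]] assms
  by (auto simp: ends_linked_arc)

lemma Union_linked_pairs: "\<Union> (linked_pairs n al) = linked_arc ` {..<length ys}"
proof (intro equalityI subsetI)
  fix e assume "e \<in> \<Union> (linked_pairs n al)"
  then obtain j where "j < length ys div 2" "e = linked_arc (2 * j) \<or> e = linked_arc (2 * j + 1)"
    by (auto simp: linked_pairs_def linked_arc_def twin_def Let_def)
  then show "e \<in> linked_arc ` {..<length ys}" by auto
next
  fix e assume "e \<in> linked_arc ` {..<length ys}"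
  then obtain i where i: "i < length ys" "e = linked_arc i" by blast
  then have "i div 2 < length ys div 2" using even_length_ys by (auto elim!: evenE)
  moreover have "e \<in> {linked_arc (2 * (i div 2)), linked_arc (2 * (i div 2) + 1)}"
    using i(2) by (cases "even i") (auto elim!: evenE oddE)
  ultimately show "e \<in> \<Union> (linked_pairs n al)"
    by (auto simp: linked_pairs_def linked_arc_def twin_def Let_def)
qed

abbreviation noncrossing_arcs :: "(int \<times> int) set" where
  "noncrossing_arcs \<equiv> height_matching - crossing_arcs height_matching"

lemma cup_arcs_eq: "cup_arcs n al = noncrossing_arcs \<union> linked_arc ` {..<length ys}"
  by (simp add: cup_arcs_def matching_eq_height_matching Union_linked_pairs)

lemma ends_noncrossing_arc:
  assumes "e \<in> noncrossing_arcs" "p \<in> ends e"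
  shows "p \<notin> set ys" "- p \<notin> set ys"
proof -
  have "e \<noteq> (- y, y)" if "y \<in> set ys" for y
    using assms(1) that by (auto simp: set_ys crossing_arcs_def height_matching_def)
  moreover have "p \<in> Pts n" using hm.arc_ends[of e] assms by (auto simp: ends_def)
  moreover have "(- y, y) \<in> height_matching" if "y \<in> set ys" for y
    using that by (simp add: set_ys height_matching_def)
  ultimately show "p \<notin> set ys" "- p \<notin> set ys"
    using hm.arc_at_eq[of p e] assms by (force simp: ends_def)+
qed

lemma unique_cup_arc_at:
  assumes p: "p \<in> Pts n"
  shows "\<exists>!e. e \<in> cup_arcs n al \<and> p \<in> ends e"
proof -
  have linked_ends: "p \<in> set ys \<or> - p \<in> set ys" if "p \<in> ends (linked_arc k)" "k < length ys" for k
    using that nth_mem[OF that(2)] nth_mem[OF twin_less[OF that(2)]] by (auto simp: ends_linked_arc)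
  have cup_cases: "e \<in> noncrossing_arcs \<or> (\<exists>k < length ys. e = linked_arc k)"
    if "e \<in> cup_arcs n al" for e
    using that by (auto simp: cup_arcs_eq)
  consider i where "i < length ys" "p = ys ! i" | i where "i < length ys" "p = - (ys ! i)"
    | "p \<notin> set ys" "- p \<notin> set ys"
    by (metis in_set_conv_nth minus_minus)
  then show ?thesis
  proof cases
    case 1
    show ?thesis
    proof (rule ex1I[of _ "linked_arc i"])
      fix e assume "e \<in> cup_arcs n al \<and> p \<in> ends e"
      then show "e = linked_arc i"
        using cup_cases ends_noncrossing_arc(1) nth_mem[OF 1(1)] linked_arc_at(1)[OF 1(1)] 1(2) by metis
    qed (use 1 linked_arc_at(1) in \<open>auto simp: cup_arcs_eq\<close>)
  next
    case 2
    show ?thesis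
    proof (rule ex1I[of _ "linked_arc (twin i)"])
      fix e assume "e \<in> cup_arcs n al \<and> p \<in> ends e"
      then show "e = linked_arc (twin i)"
        using cup_cases ends_noncrossing_arc(2) nth_mem[OF 2(1)] linked_arc_at(2)[OF 2(1)] 2(2)
        by (metis minus_minus)
    qed (use 2 linked_arc_at(2) twin_less in \<open>auto simp: cup_arcs_eq\<close>)
  next
    case 3
    obtain e where e: "e \<in> height_matching" "p \<in> ends e" using hm.unique_arc_at[OF p] by blast
    have "e \<notin> crossing_arcs height_matching"
      using e(2) 3 by (auto simp: crossing_arcs_height_matching set_ys ends_def)
    show ?thesis
    proof (rule ex1I[of _ e])
      fix e' assume e': "e' \<in> cup_arcs n al \<and> p \<in> ends e'"
      then show "e' = e"
        using cup_cases linked_ends 3 hm.arc_at_eq[OF p _ _ e(1,2)] by blast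
    qed (use e \<open>e \<notin> crossing_arcs height_matching\<close> in \<open>auto simp: cup_arcs_eq\<close>)
  qed
qed

lemma cup_arc_props:
  assumes "e \<in> cup_arcs n al"
  shows "fst e \<in> Pts n \<and> snd e \<in> Pts n \<and> fst e < snd e"
    and "mirror e \<in> cup_arcs n al" and "mirror e \<noteq> e"
proof -
  from assms consider "e \<in> noncrossing_arcs" | i where "i < length ys" "e = linked_arc i"
    by (auto simp: cup_arcs_eq)
  then have "(fst e \<in> Pts n \<and> snd e \<in> Pts n \<and> fst e < snd e) \<and> mirror e \<in> cup_arcs n al \<and> mirror e \<noteq> e"
  proof cases
    case 1
    then have m: "matched (fst e) (snd e)" "\<not> crosses_zero e"
      by (auto simp: height_matching_def crossing_arcs_def crosses_zero_def)
    have "fst e \<in> Pts n \<and> snd e \<in> Pts n \<and> fst e < snd e"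
      using m(1) matched_right_end(1)[OF m(1)] by (simp add: matched_def)
    moreover have "mirror e \<in> noncrossing_arcs"
      using matched_mirror[OF m(1)] m(2)
      by (auto simp: height_matching_def crossing_arcs_def crosses_zero_def mirror_def)
    moreover have "mirror e \<noteq> e"
      using m by (auto simp: mirror_def crosses_zero_def prod_eq_iff matched_def)
    ultimately show ?thesis by (simp add: cup_arcs_eq)
  next
    case 2
    have "fst e \<in> Pts n \<and> snd e \<in> Pts n \<and> fst e < snd e"
      using 2 ys_nth[OF 2(1)] ys_nth[OF twin_less[OF 2(1)]] by (simp add: linked_arc_def)
    moreover have "mirror e \<in> cup_arcs n al"
      using 2 twin_less by (simp add: cup_arcs_eq mirror_linked_arc)
    moreover have "mirror e \<noteq> e"
      using 2 nth_ys_eq_iff[OF twin_less[OF 2(1)] 2(1)] twin_neq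
      by (simp add: linked_arc_def mirror_def)
    ultimately show ?thesis by blast
  qed
  then show "fst e \<in> Pts n \<and> snd e \<in> Pts n \<and> fst e < snd e"
    and "mirror e \<in> cup_arcs n al" and "mirror e \<noteq> e" by blast+
qed

lemma symmetric_matching_cup_arcs: "symmetric_matching (Pts n) (cup_arcs n al)"
  by unfold_locales (simp_all add: cup_arc_props unique_cup_arc_at finite_Pts uminus_mem_Pts zero_notin_Pts)

lemma linked_pairs_eq: "linked_pairs n al = (\<lambda>l. {l, mirror l}) ` {l \<in> cup_arcs n al. crosses_zero l}"
proof -
  have "linked_pairs n al = (\<lambda>i. {linked_arc i, linked_arc (twin i)}) ` {..<length ys}"
  proof (intro equalityI subsetI)
    fix L assume "L \<in> linked_pairs n al"
    then obtain j where "j < length ys div 2" "L = {linked_arc (2 * j), linked_arc (twin (2 * j))}"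
      by (auto simp: linked_pairs_def Let_def linked_arc_def twin_def)
    then show "L \<in> (\<lambda>i. {linked_arc i, linked_arc (twin i)}) ` {..<length ys}" by auto
  next
    fix L assume "L \<in> (\<lambda>i. {linked_arc i, linked_arc (twin i)}) ` {..<length ys}"
    then obtain i where i: "i < length ys" "L = {linked_arc i, linked_arc (twin i)}" by blast
    then have "i div 2 < length ys div 2" using even_length_ys by (auto elim!: evenE)
    moreover have "L = {linked_arc (2 * (i div 2)), linked_arc (2 * (i div 2) + 1)}"
      using i(2) by (cases "even i") (auto simp: twin_def elim!: evenE oddE)
    ultimately show "L \<in> linked_pairs n al"
      by (auto simp: linked_pairs_def Let_def linked_arc_def twin_def)
  qed
  moreover have "{l \<in> cup_arcs n al. crosses_zero l} = linked_arc ` {..<length ys}"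
    using crosses_zero_linked_arc by (auto simp: cup_arcs_eq crossing_arcs_def crosses_zero_def)
  ultimately show ?thesis by (auto simp: mirror_linked_arc)
qed

end

theorem lemma3p7:
  fixes n :: nat and w w' :: "int \<Rightarrow> int" and C :: "tarc set"
  assumes "n \<ge> 4" and "in_Wp n w" and "in_Wp n w'" and "C \<in> circles n w' w"
  shows "(crosses_middle C \<longrightarrow>
            (\<forall>L \<in> CD_linked n w' w. meets C L \<longrightarrow> L \<subseteq> C) \<or>
            (\<forall>L \<in> CD_linked n w' w. meets C L \<longrightarrow> card (L \<inter> C) = 1))
       \<and> ((\<forall>L \<in> CD_linked n w' w. meets C L \<longrightarrow> card (L \<inter> C) = 1) \<longrightarrow>
            even (card {L \<in> CD_linked n w' w. meets C L}))
       \<and> ((\<exists>L \<in> CD_linked n w' w. meets C L) \<and>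
          (\<forall>L \<in> CD_linked n w' w. meets C L \<longrightarrow> L \<subseteq> C) \<longrightarrow>
            odd (card {L \<in> CD_linked n w' w. meets C L}))"
proof -
  interpret D: circle_diagram "Pts n" "cup_arcs n (signs n w)" "cup_arcs n (signs n w')"
    by (simp add: circle_diagram_def cup_diagram.symmetric_matching_cup_arcs)
  have "CD_arcs n w' w = D.arcs" by (simp add: CD_arcs_def D.arcs_def)
  then obtain e where e: "e \<in> D.arcs" "C = D.circle e"
    using assms(4) unfolding circles_def Let_def D.circle_def D.touching_def by auto
  have tag: "image (Pair b) ` (\<lambda>l. {l, mirror l}) ` S = (\<lambda>l. {l, apsnd mirror l}) ` Pair b ` S"
    for b :: bool and S by (simp add: image_image)
  have "{l \<in> D.arcs. crosses_zero (snd l)} =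
      Pair False ` {l \<in> cup_arcs n (signs n w). crosses_zero l}
      \<union> Pair True ` {l \<in> cup_arcs n (signs n w'). crosses_zero l}"
    by (auto simp: D.arcs_def)
  then have "CD_linked n w' w = D.linked"
    by (simp add: CD_linked_def D.linked_def cup_diagram.linked_pairs_eq tag image_Un)
  then show ?thesis
    using D.circle_linked_dichotomy[OF e(1)] D.even_card_linked_met[OF e(1)]
      D.odd_card_linked_met[OF e(1)] e(2) by simp
qed

end
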